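(* Let $\textbf{F}$ be a $gH$-differentiable IVF on a nonempty subset $\mathcal{X}$ of $\mathbb{R}^n$. If $\bar{x}\in\mathcal{X}$ is an efficient solution of the problem $\min_{x\in\mathcal{X}}\textbf{F}(x)$, then $0\in D_i\textbf{F}(\bar{x})$ for each $i\in\{1,2,\dots,n\}$.
   Context: $I(\mathbb{R})$: closed bounded intervals $\textbf{A}=[\underline{a},\overline{a}]$ with Moore arithmetic ($\oplus$ endpointwise; $\lambda\odot\textbf{A}=[\lambda\underline{a},\lambda\overline{a}]$ if $\lambda\ge0$, $[\lambda\overline{a},\lambda\underline{a}]$ if $\lambda<0$); $gH$-difference $\textbf{A}\ominus_{gH}\textbf{B}=[\min\{\underline{a}-\underline{b},\overline{a}-\overline{b}\},\max\{\underline{a}-\underline{b},\overline{a}-\overline{b}\}]$; limits in the norm $\max\{|\underline{a}|,|\overline{a}|\}$. $\textbf{A}\prec\textbf{B}$ iff $\underline{a}\le\underline{b}$, $\overline{a}\le\overline{b}$ and $\textbf{A}\ne\textbf{B}$; $\nprec$ is its negation. An IVF is $\textbf{F}(x)=[\underline{f}(x),\overline{f}(x)]$. $D_i\textbf{F}(\bar{x})=\lim_{h\to0}\frac1h\odot(\textbf{F}(\bar{x}+he_i)\ominus_{gH}\textbf{F}(\bar{x}))$. Linear IVF: $\textbf{L}(x)=\bigoplus_i x_i\odot\textbf{L}(e_i)$. $\textbf{F}$ is $gH$-differentiable at $\bar{x}$ if there exist a linear IVF $\textbf{L}_{\bar{x}}$, an IVF $\textbf{E}(\textbf{F}(\bar{x});d)$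 and $\delta>0$ with $(\textbf{F}(\bar{x}+d)\ominus_{gH}\textbf{F}(\bar{x}))\ominus_{gH}\textbf{L}_{\bar{x}}(d)=\lVert d\rVert\odot\textbf{E}(\textbf{F}(\bar{x});d)$ for $\lVert d\rVert<\delta$ and $\textbf{E}\to\textbf{0}$ as $\lVert d\rVert\to0$; on $\mathcal{X}$ means at every point. $\bar{x}$ is an efficient solution of $\min_{x\in\mathcal{X}}\textbf{F}(x)$ if $\textbf{F}(x)\nprec\textbf{F}(\bar{x})$ for all $x\in\mathcal{X}$, $x\ne\bar{x}$. *)

theory Defs
  imports "HOL-Analysis.Analysis"
begin

text \<open>Closed bounded intervals [a_lo, a_hi] are represented as pairs (a_lo, a_hi);
  a pair is a genuine interval iff fst <= snd.\<close>
type_synonym ival = "real \<times> real"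

definition is_ival :: "ival \<Rightarrow> bool" where
  "is_ival A \<longleftrightarrow> fst A \<le> snd A"

definition iv_add :: "ival \<Rightarrow> ival \<Rightarrow> ival" where
  "iv_add A B = (fst A + fst B, snd A + snd B)"

definition iv_smul :: "real \<Rightarrow> ival \<Rightarrow> ival" where
  "iv_smul l A = (if l \<ge> 0 then (l * fst A, l * snd A) else (l * snd A, l * fst A))"

definition iv_gH :: "ival \<Rightarrow> ival \<Rightarrow> ival" where
  "iv_gH A B = (min (fst A - fst B) (snd A - snd B), max (fst A - fst B) (snd A - snd B))"

definition iv_norm :: "ival \<Rightarrow> real" where
  "iv_norm A = max \<bar>fst A\<bar> \<bar>snd A\<bar>"

definition iv_prec :: "ival \<Rightarrow> ival \<Rightarrow> bool" where
  "iv_prec A B \<longleftrightarrow> fst A \<le> fst B \<and> snd A \<le> snd B \<and> A \<noteq> B"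

definition iv_mem :: "real \<Rightarrow> ival \<Rightarrow> bool" where
  "iv_mem r A \<longleftrightarrow> fst A \<le> r \<and> r \<le> snd A"

definition iv_tendsto_at0 :: "(real \<Rightarrow> ival) \<Rightarrow> ival \<Rightarrow> bool" where
  "iv_tendsto_at0 G D \<longleftrightarrow> ((\<lambda>h. iv_norm (iv_gH (G h) D)) \<longlongrightarrow> 0) (at 0)"

definition gH_partial :: "(real^'n \<Rightarrow> ival) \<Rightarrow> real^'n \<Rightarrow> 'n \<Rightarrow> ival \<Rightarrow> bool" where
  "gH_partial F x i D \<longleftrightarrow>
     iv_tendsto_at0 (\<lambda>h. iv_smul (1 / h) (iv_gH (F (x + h *\<^sub>R axis i 1)) (F x))) D"

text \<open>Linear IVF determined by its values Lv i = L(e_i):  L(x) = sum_i x_i (.) L(e_i).\<close>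
definition iv_linear_apply :: "('n::finite \<Rightarrow> ival) \<Rightarrow> real^'n \<Rightarrow> ival" where
  "iv_linear_apply Lv d =
     ((\<Sum>i\<in>UNIV. fst (iv_smul (d $ i) (Lv i))), (\<Sum>i\<in>UNIV. snd (iv_smul (d $ i) (Lv i))))"

text \<open>gH-differentiability at x of an IVF F whose domain is X (so F(x+d) must be
  defined, i.e. x+d in X, for all small d).\<close>
definition gH_differentiable_at ::
  "(real^'n) set \<Rightarrow> (real^'n \<Rightarrow> ival) \<Rightarrow> real^'n \<Rightarrow> bool" where
  "gH_differentiable_at X F x \<longleftrightarrow>
     (\<exists>(Lv :: 'n \<Rightarrow> ival) (E :: real^'n \<Rightarrow> ival) (\<delta>::real).
        (\<forall>i. is_ival (Lv i)) \<and> \<delta> > 0 \<and> ball x \<delta> \<subseteq> X \<and>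
        (\<forall>d. norm d < \<delta> \<longrightarrow>
           iv_gH (iv_gH (F (x + d)) (F x)) (iv_linear_apply Lv d) = iv_smul (norm d) (E d)) \<and>
        ((\<lambda>d. iv_norm (E d)) \<longlongrightarrow> 0) (at 0))"

definition gH_differentiable_on ::
  "(real^'n) set \<Rightarrow> (real^'n \<Rightarrow> ival) \<Rightarrow> bool" where
  "gH_differentiable_on X F \<longleftrightarrow> (\<forall>x\<in>X. gH_differentiable_at X F x)"

definition efficient_solution ::
  "(real^'n) set \<Rightarrow> (real^'n \<Rightarrow> ival) \<Rightarrow> real^'n \<Rightarrow> bool" where
  "efficient_solution X F xb \<longleftrightarrow> xb \<in> X \<and> (\<forall>x\<in>X. x \<noteq> xb \<longrightarrow> \<not> iv_prec (F x) (F xb))"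

end

theory Submission
  imports Defs
begin

text \<open>If \<open>F\<close> is gH-differentiable at \<open>x\<close> with linear part \<open>L\<close>, the difference
  quotients along \<open>e\<^sub>i\<close> converge to \<open>L(e\<^sub>i)\<close>, because rescaling a gH-difference by \<open>1/h\<close>
  rescales its norm by \<open>1/\<bar>h\<bar>\<close>. If \<open>0 \<notin> L(e\<^sub>i)\<close>, say the upper endpoint of \<open>L(e\<^sub>i)\<close> is negative,
  then for small \<open>h > 0\<close> the upper endpoint of the quotient is negative as well; this means
  that both endpoints of \<open>F(x + h e\<^sub>i)\<close> lie strictly below those of \<open>F(x)\<close>, contradicting
  efficiency. A positive lower endpoint is handled by \<open>h < 0\<close>.\<close>

lemma iv_norm_gH: "iv_norm (iv_gH A B) = max \<bar>fst A - fst B\<bar> \<bar>snd A - snd B\<bar>"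
  unfolding iv_norm_def iv_gH_def by auto

lemma iv_norm_smul: "iv_norm (iv_smul c A) = \<bar>c\<bar> * iv_norm A"
  unfolding iv_norm_def iv_smul_def by (auto simp: abs_mult max_mult_distrib_left)

lemma iv_norm_gH_smul_inverse:
  assumes "h \<noteq> 0"
  shows "\<bar>h\<bar> * iv_norm (iv_gH (iv_smul (1 / h) A) B) = iv_norm (iv_gH A (iv_smul h B))"
proof -
  have scale: "\<bar>h\<bar> * \<bar>a / h - b\<bar> = \<bar>a - h * b\<bar>" for a b
    using assms by (simp add: abs_mult[symmetric] right_diff_distrib)
  have distrib: "\<bar>h\<bar> * max a b = max (\<bar>h\<bar> * a) (\<bar>h\<bar> * b)" for a b :: real
    by (simp add: max_mult_distrib_left)
  show ?thesis
  proof (cases "h > 0")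
    case True
    then have "iv_smul (1 / h) A = (fst A / h, snd A / h)" "iv_smul h B = (h * fst B, h * snd B)"
      by (simp_all add: iv_smul_def)
    then show ?thesis
      by (simp only: iv_norm_gH fst_conv snd_conv distrib scale)
  next
    case False
    with assms have "iv_smul (1 / h) A = (snd A / h, fst A / h)" "iv_smul h B = (h * snd B, h * fst B)"
      by (simp_all add: iv_smul_def)
    then show ?thesis
      by (simp only: iv_norm_gH fst_conv snd_conv distrib scale max.commute)
  qed
qed

lemma iv_linear_apply_axis: "iv_linear_apply Lv (h *\<^sub>R axis i 1) = iv_smul h (Lv i)"
proof -
  have "(\<Sum>j\<in>UNIV. g (iv_smul ((h *\<^sub>R axis i 1) $ j) (Lv j))) = g (iv_smul h (Lv i))"
    if "g (0, 0) = 0" for g :: "ival \<Rightarrow> real"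
  proof -
    have "(\<Sum>j\<in>UNIV. g (iv_smul ((h *\<^sub>R axis i 1) $ j) (Lv j)))
        = (\<Sum>j\<in>UNIV. if j = i then g (iv_smul h (Lv i)) else 0)"
      by (rule sum.cong) (auto simp: axis_def iv_smul_def that)
    then show ?thesis
      by simp
  qed
  then show ?thesis
    unfolding iv_linear_apply_def by simp
qed

lemma iv_prec_if_snd_gH_neg: "snd (iv_gH A B) < 0 \<Longrightarrow> iv_prec A B"
  unfolding iv_gH_def iv_prec_def by auto

lemma gH_differentiable_at_interior: "gH_differentiable_at X F x \<Longrightarrow> x \<in> interior X"
  unfolding gH_differentiable_at_def mem_interior by blast

lemma filterlim_scaleR_axis_at_0: "filterlim (\<lambda>h::real. h *\<^sub>R axis i (1::real)) (at 0) (at 0)"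
proof (rule filterlim_atI)
  show "((\<lambda>h::real. h *\<^sub>R axis i (1::real)) \<longlongrightarrow> 0) (at 0)"
    by (auto intro!: tendsto_eq_intros)
  show "\<forall>\<^sub>F h in at 0. h *\<^sub>R axis i (1::real) \<noteq> 0"
    by (auto simp: eventually_at_filter axis_eq_0_iff)
qed

lemma gH_differentiable_at_partial:
  assumes "gH_differentiable_at X F x"
  shows "\<exists>D. gH_partial F x i D"
proof -
  obtain Lv E \<delta> where "\<delta> > 0"
    and remainder: "\<forall>d. norm d < \<delta> \<longrightarrow>
           iv_gH (iv_gH (F (x + d)) (F x)) (iv_linear_apply Lv d) = iv_smul (norm d) (E d)"
    and E_lim: "((\<lambda>d. iv_norm (E d)) \<longlongrightarrow> 0) (at 0)"
    using assms unfolding gH_differentiable_at_def by blast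
  define Q where "Q h = iv_smul (1 / h) (iv_gH (F (x + h *\<^sub>R axis i 1)) (F x))" for h
  have Q_dist: "iv_norm (iv_gH (Q h) (Lv i)) = iv_norm (E (h *\<^sub>R axis i 1))"
    if "h \<noteq> 0" "\<bar>h\<bar> < \<delta>" for h
  proof -
    have "\<bar>h\<bar> * iv_norm (iv_gH (Q h) (Lv i))
        = iv_norm (iv_gH (iv_gH (F (x + h *\<^sub>R axis i 1)) (F x)) (iv_smul h (Lv i)))"
      unfolding Q_def using iv_norm_gH_smul_inverse[OF \<open>h \<noteq> 0\<close>] .
    also have "\<dots> = \<bar>h\<bar> * iv_norm (E (h *\<^sub>R axis i 1))"
      using remainder[rule_format, of "h *\<^sub>R axis i 1"] that
      by (simp add: iv_linear_apply_axis iv_norm_smul)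
    finally show ?thesis
      using that by simp
  qed
  have "((\<lambda>h. iv_norm (E (h *\<^sub>R axis i 1))) \<longlongrightarrow> 0) (at 0)"
    using filterlim_compose[OF E_lim filterlim_scaleR_axis_at_0] by (simp add: o_def)
  moreover have "\<forall>\<^sub>F h in at 0. iv_norm (E (h *\<^sub>R axis i 1)) = iv_norm (iv_gH (Q h) (Lv i))"
    unfolding eventually_at using \<open>\<delta> > 0\<close> Q_dist by (auto intro!: exI[of _ \<delta>])
  ultimately have "((\<lambda>h. iv_norm (iv_gH (Q h) (Lv i))) \<longlongrightarrow> 0) (at 0)"
    by (rule Lim_transform_eventually)
  then show ?thesis
    unfolding gH_partial_def iv_tendsto_at0_def Q_def by blast
qed

lemma efficient_solution_eventually_not_prec:
  assumes "efficient_solution X F x" "x \<in> interior X"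
  shows "\<forall>\<^sub>F h in at 0. \<not> iv_prec (F (x + h *\<^sub>R axis i 1)) (F x)"
proof -
  obtain \<epsilon> where "\<epsilon> > 0" "ball x \<epsilon> \<subseteq> X"
    using assms(2) mem_interior by blast
  moreover have "x + h *\<^sub>R axis i 1 \<in> X" if "\<bar>h\<bar> < \<epsilon>" for h
    using that \<open>ball x \<epsilon> \<subseteq> X\<close> by (auto simp: dist_norm)
  ultimately show ?thesis
    using assms(1) unfolding eventually_at efficient_solution_def
    by (auto simp: axis_eq_0_iff intro!: exI[of _ \<epsilon>])
qed

lemma efficient_solution_partial_mem_zero:
  assumes "efficient_solution X F x" "x \<in> interior X" "gH_partial F x i D"
  shows "iv_mem 0 D"
proof (rule ccontr)
  define G where "G h = iv_gH (F (x + h *\<^sub>R axis i 1)) (F x)" for h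
  have quotient_lim: "((\<lambda>h. iv_norm (iv_gH (iv_smul (1 / h) (G h)) D)) \<longlongrightarrow> 0) (at 0)"
    using assms(3) unfolding gH_partial_def iv_tendsto_at0_def G_def .
  have no_descent: "\<forall>\<^sub>F h in at 0. snd (G h) \<ge> 0"
    using efficient_solution_eventually_not_prec[OF assms(1,2), of i]
    by eventually_elim (metis G_def iv_prec_if_snd_gH_neg not_le)
  have close: "\<forall>\<^sub>F h in at 0. iv_norm (iv_gH (iv_smul (1 / h) (G h)) D) < \<epsilon> \<and> snd (G h) \<ge> 0"
    if "\<epsilon> > 0" for \<epsilon>
    using order_tendstoD(2)[OF quotient_lim that] no_descent by (rule eventually_conj)
  assume "\<not> iv_mem 0 D"
  then consider "snd D < 0" | "fst D > 0"
    unfolding iv_mem_def by linarith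
  then show False
  proof cases
    case 1
    have "\<forall>\<^sub>F h in at_right (0::real). h > 0"
      by (rule eventually_at_right_less)
    moreover have "\<forall>\<^sub>F h in at_right 0.
        iv_norm (iv_gH (iv_smul (1 / h) (G h)) D) < - snd D \<and> snd (G h) \<ge> 0"
      using close[of "- snd D"] 1 eventually_at_split by auto
    ultimately have "\<forall>\<^sub>F h in at_right (0::real). False"
      by eventually_elim (clarsimp simp: iv_norm_gH iv_smul_def, smt (verit) divide_nonneg_pos)
    then show False
      by simp
  next
    case 2
    have "\<forall>\<^sub>F h in at_left (0::real). h < 0"
      by (simp add: eventually_at_filter)
    moreover have "\<forall>\<^sub>F h in at_left 0.
        iv_norm (iv_gH (iv_smul (1 / h) (G h)) D) < fst D \<and> snd (G h) \<ge> 0"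
      using close[of "fst D"] 2 eventually_at_split by auto
    ultimately have "\<forall>\<^sub>F h in at_left (0::real). False"
      by eventually_elim (clarsimp simp: iv_norm_gH iv_smul_def, smt (verit) divide_nonneg_neg)
    then show False
      by simp
  qed
qed

theorem corollary4p1:
  fixes X :: "(real^'n) set" and F :: "real^'n \<Rightarrow> ival" and xb :: "real^'n"
  assumes "X \<noteq> {}"
    and "\<forall>x\<in>X. is_ival (F x)"
    and "gH_differentiable_on X F"
    and "efficient_solution X F xb"
  shows "\<forall>i. \<exists>D. gH_partial F xb i D \<and> iv_mem 0 D"
proof
  fix i
  have "gH_differentiable_at X F xb"
    using assms(3,4) unfolding gH_differentiable_on_def efficient_solution_def by blast
  then obtain D where "gH_partial F xb i D" and "xb \<in> interior X"
    using gH_differentiable_at_partial gH_differentiable_at_interior by blast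
  then show "\<exists>D. gH_partial F xb i D \<and> iv_mem 0 D"
    using efficient_solution_partial_mem_zero[OF assms(4)] by blast
qed

end
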